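(* Let $K_A,K_B\ge2$, $\nu_A=K_A-1$, $\nu_B=K_B-1$, and let $H$ be a probability distribution on $(0,\infty)^2$. Consider a single unit with $\mu_A=\mu_B$ (null), $(\sigma_A^2,\sigma_B^2)\sim H$, and conditionally on $(\sigma_A^2,\sigma_B^2)$, independent $\hat\mu_A\sim N(\mu_A,\sigma_A^2/K_A)$, $\hat\sigma_A^2\sim(\sigma_A^2/\nu_A)\chi^2_{\nu_A}$, $\hat\mu_B\sim N(\mu_B,\sigma_B^2/K_B)$, $\hat\sigma_B^2\sim(\sigma_B^2/\nu_B)\chi^2_{\nu_B}$. Then almost surely $$\mathbb P_H\big(\mathrm P^{DV}(T^{BF},\hat\sigma_A^2,\hat\sigma_B^2;H)\le\alpha\mid\hat\sigma_A^2,\hat\sigma_B^2\big)=\alpha\quad\text{for all }\alpha\in(0,1),$$ and hence $\mathbb P_H(\mathrm P^{DV}(T^{BF},\hat\sigma_A^2,\hat\sigma_B^2;H)\le\alpha)=\alpha$ for all $\alpha\in(0,1)$, where $\mathbb P_H$ integrates over $(\sigma_A^2,\sigma_B^2)\sim H$ and the data.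
   Context: $T^{BF}=(\hat\mu_A-\hat\mu_B)/\sqrt{\hat\sigma_A^2/K_A+\hat\sigma_B^2/K_B}$. For $t\in\mathbb R$, $s_A^2,s_B^2,\sigma_A^2,\sigma_B^2>0$: $\mathrm P^{DV}(t,s_A^2,s_B^2;\sigma_A^2,\sigma_B^2)=2\Phi\big(-|t|\sqrt{(s_A^2/K_A+s_B^2/K_B)/(\sigma_A^2/K_A+\sigma_B^2/K_B)}\big)$, with $\Phi$ the standard normal CDF. Let $p_\nu(s^2\mid\sigma^2)=\frac{\nu}{\sigma^2}\frac{1}{2^{\nu/2}\Gamma(\nu/2)}(\nu s^2/\sigma^2)^{\nu/2-1}\exp(-\nu s^2/(2\sigma^2))$ be the density of $(\sigma^2/\nu)\chi^2_\nu$, and $p(s_A^2,s_B^2\mid\sigma_A^2,\sigma_B^2)=p_{\nu_A}(s_A^2\mid\sigma_A^2)p_{\nu_B}(s_B^2\mid\sigma_B^2)$. For a distribution $H$ on $(0,\infty)^2$, $$\mathrm P^{DV}(t,s_A^2,s_B^2;H)=\frac{\int\mathrm P^{DV}(t,s_A^2,s_B^2;\sigma_A^2,\sigma_B^2)\,p(s_A^2,s_B^2\mid\sigma_A^2,\sigma_B^2)\,dH}{\int p(s_A^2,s_B^2\mid\sigma_A^2,\sigma_B^2)\,dH}.$$ *)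

theory Defs
  imports "HOL-Probability.Probability"
begin

definition Phi :: "real \<Rightarrow> real" where
  "Phi x = measure (density lborel std_normal_density) {..x}"

text \<open>Density of (sigma2/nu) chi^2_nu at s2 (zero for s2 \<le> 0).\<close>
definition p_nu :: "real \<Rightarrow> real \<Rightarrow> real \<Rightarrow> real" where
  "p_nu \<nu> s2 \<sigma>2 = (if 0 < s2 then
      (\<nu> / \<sigma>2) * (1 / (2 powr (\<nu>/2) * Gamma (\<nu>/2)))
        * (\<nu> * s2 / \<sigma>2) powr (\<nu>/2 - 1) * exp (- \<nu> * s2 / (2 * \<sigma>2))
    else 0)"

definition p_joint :: "nat \<Rightarrow> nat \<Rightarrow> real \<Rightarrow> real \<Rightarrow> real \<times> real \<Rightarrow> real" where
  "p_joint KA KB sA sB \<sigma> =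
     p_nu (real KA - 1) sA (fst \<sigma>) * p_nu (real KB - 1) sB (snd \<sigma>)"

definition PDV :: "nat \<Rightarrow> nat \<Rightarrow> real \<Rightarrow> real \<Rightarrow> real \<Rightarrow> real \<times> real \<Rightarrow> real" where
  "PDV KA KB t sA sB \<sigma> =
     2 * Phi (- \<bar>t\<bar> * sqrt ((sA / real KA + sB / real KB)
                            / (fst \<sigma> / real KA + snd \<sigma> / real KB)))"

definition PDV_H :: "nat \<Rightarrow> nat \<Rightarrow> (real \<times> real) measure \<Rightarrow> real \<Rightarrow> real \<Rightarrow> real \<Rightarrow> real" where
  "PDV_H KA KB H t sA sB =
     (\<integral>\<sigma>. PDV KA KB t sA sB \<sigma> * p_joint KA KB sA sB \<sigma> \<partial>H)
     / (\<integral>\<sigma>. p_joint KA KB sA sB \<sigma> \<partial>H)"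

text \<open>Sample space: ((sigmaA2, sigmaB2), (muhatA, sigmahatA2, muhatB, sigmahatB2)).\<close>
type_synonym bf_outcome = "(real \<times> real) \<times> (real \<times> real \<times> real \<times> real)"

definition muhatA :: "bf_outcome \<Rightarrow> real" where "muhatA \<omega> = fst (snd \<omega>)"
definition sighatA :: "bf_outcome \<Rightarrow> real" where "sighatA \<omega> = fst (snd (snd \<omega>))"
definition muhatB :: "bf_outcome \<Rightarrow> real" where "muhatB \<omega> = fst (snd (snd (snd \<omega>)))"
definition sighatB :: "bf_outcome \<Rightarrow> real" where "sighatB \<omega> = snd (snd (snd (snd \<omega>)))"

definition bf_model :: "(real \<times> real) measure \<Rightarrow> nat \<Rightarrow> nat \<Rightarrow> real \<Rightarrow> real \<Rightarrow> bf_outcome measure" where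
  "bf_model H KA KB \<mu>A \<mu>B =
     density (H \<Otimes>\<^sub>M (lborel \<Otimes>\<^sub>M lborel \<Otimes>\<^sub>M lborel \<Otimes>\<^sub>M lborel))
       (\<lambda>(\<sigma>, (mA, sA, mB, sB)). ennreal (
          normal_density \<mu>A (sqrt (fst \<sigma> / real KA)) mA * p_nu (real KA - 1) sA (fst \<sigma>)
        * normal_density \<mu>B (sqrt (snd \<sigma> / real KB)) mB * p_nu (real KB - 1) sB (snd \<sigma>)))"

definition T_BF :: "nat \<Rightarrow> nat \<Rightarrow> bf_outcome \<Rightarrow> real" where
  "T_BF KA KB \<omega> = (muhatA \<omega> - muhatB \<omega>)
      / sqrt (sighatA \<omega> / real KA + sighatB \<omega> / real KB)"

end

theory Submission
  imports Defs
begin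

text \<open>
  Fix the variances \<open>\<sigma> = (\<sigma>\<^sub>A, \<sigma>\<^sub>B)\<close> and the sample variances \<open>s = (s\<^sub>A, s\<^sub>B)\<close>. Under the null
  hypothesis the difference of the sample means is centred normal with variance
  \<open>\<sigma>\<^sub>A / K\<^sub>A + \<sigma>\<^sub>B / K\<^sub>B\<close>, so the probability that \<open>|T| \<ge> t\<close> is \<open>PDV t s \<sigma>\<close>. Averaging over
  the posterior of \<open>\<sigma>\<close> given \<open>s\<close>, whose density with respect to \<open>H\<close> is proportional to
  \<open>p(s | \<sigma>)\<close>, shows that \<open>G(t) = PDV_H t s\<close> is the conditional probability of \<open>|T| \<ge> t\<close> given
  \<open>s\<close>. Now \<open>G\<close> is continuous, decreasing in \<open>|t|\<close>, \<open>G(0) = 1\<close> and \<open>G(t) \<rightarrow> 0\<close>; hence for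
  \<open>0 < \<alpha> < 1\<close> the event \<open>G(T) \<le> \<alpha>\<close> is \<open>|T| \<ge> t\<^sub>\<alpha>\<close> with \<open>G(t\<^sub>\<alpha>) = \<alpha>\<close>, and its conditional
  probability given \<open>s\<close> is \<open>\<alpha>\<close>.
\<close>

section \<open>The standard normal distribution\<close>

lemma Phi_eq_cdf: "Phi = cdf (density lborel std_normal_density)"
  by (rule ext) (simp add: Phi_def cdf_def)

lemma real_distribution_std_normal: "real_distribution (density lborel std_normal_density)"
  by (auto simp: real_distribution_def real_distribution_axioms_def prob_space_normal_density)

lemma finite_borel_measure_std_normal: "finite_borel_measure (density lborel std_normal_density)"
  by (rule real_distribution.finite_borel_measure_M[OF real_distribution_std_normal])

lemma Phi_mono: "x \<le> y \<Longrightarrow> Phi x \<le> Phi y"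
  unfolding Phi_eq_cdf by (rule finite_borel_measure.cdf_nondecreasing[OF finite_borel_measure_std_normal])

lemma Phi_nonneg: "0 \<le> Phi x"
  by (simp add: Phi_def)

lemma Phi_le_1: "Phi x \<le> 1"
  unfolding Phi_eq_cdf by (rule real_distribution.cdf_bounded_prob[OF real_distribution_std_normal])

lemma Phi_at_bot: "(Phi \<longlongrightarrow> 0) at_bot"
  unfolding Phi_eq_cdf by (rule finite_borel_measure.cdf_lim_at_bot[OF finite_borel_measure_std_normal])

lemma isCont_Phi: "isCont Phi x"
proof -
  have "emeasure (density lborel std_normal_density) {x} = 0"
    by (subst emeasure_density) (auto intro!: nn_integral_null_set)
  then show ?thesis
    unfolding Phi_eq_cdf
    by (simp add: finite_borel_measure.isCont_cdf[OF finite_borel_measure_std_normal] measure_def)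
qed

lemma borel_measurable_Phi [measurable]: "Phi \<in> borel_measurable borel"
  by (rule borel_measurable_mono) (simp add: mono_def Phi_mono)

lemma nn_integral_lborel_shift:
  fixes f :: "real \<Rightarrow> ennreal"
  shows "f \<in> borel_measurable borel \<Longrightarrow> (\<integral>\<^sup>+x. f (t + x) \<partial>lborel) = (\<integral>\<^sup>+x. f x \<partial>lborel)"
  using nn_integral_real_affine[of f 1 t] by simp

lemma nn_integral_lborel_reflect:
  fixes f :: "real \<Rightarrow> ennreal"
  shows "f \<in> borel_measurable borel \<Longrightarrow> (\<integral>\<^sup>+x. f (- x) \<partial>lborel) = (\<integral>\<^sup>+x. f x \<partial>lborel)"
  using nn_integral_real_affine[of f "- 1" 0] by simp

lemma nn_integral_std_normal_atMost:
  "(\<integral>\<^sup>+u. indicator {..x} u * ennreal (std_normal_density u) \<partial>lborel) = ennreal (Phi x)"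
proof -
  interpret prob_space "density lborel std_normal_density"
    by (rule prob_space_normal_density) simp
  show ?thesis
    using emeasure_eq_measure[of "{..x}"] by (simp add: Phi_def emeasure_density mult.commute)
qed

lemma nn_integral_std_normal_abs_ge:
  assumes "0 \<le> q"
  shows "(\<integral>\<^sup>+u. indicator {u. q \<le> \<bar>u\<bar>} u * ennreal (std_normal_density u) \<partial>lborel) = ennreal (2 * Phi (- q))"
proof -
  let ?f = "\<lambda>u. indicator {..- q} u * ennreal (std_normal_density u)"
  have "(\<integral>\<^sup>+u. indicator {u. q \<le> \<bar>u\<bar>} u * ennreal (std_normal_density u) \<partial>lborel)
      = (\<integral>\<^sup>+u. ?f u + ?f (- u) \<partial>lborel)"
    using AE_lborel_singleton[of q]
    by (intro nn_integral_cong_AE, eventually_elim) (use assms in \<open>auto simp: indicator_def normal_density_def\<close>)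
  also have "\<dots> = (\<integral>\<^sup>+u. ?f u \<partial>lborel) + (\<integral>\<^sup>+u. ?f (- u) \<partial>lborel)"
    by (rule nn_integral_add) auto
  also have "(\<integral>\<^sup>+u. ?f (- u) \<partial>lborel) = (\<integral>\<^sup>+u. ?f u \<partial>lborel)"
    by (rule nn_integral_lborel_reflect) simp
  finally show ?thesis
    using Phi_nonneg[of "- q"] by (simp add: nn_integral_std_normal_atMost ennreal_plus[symmetric] del: ennreal_plus)
qed

lemma nn_integral_normal_density: "0 < s \<Longrightarrow> (\<integral>\<^sup>+x. ennreal (normal_density \<mu> s x) \<partial>lborel) = 1"
  using prob_space.emeasure_space_1[OF prob_space_normal_density, of s \<mu>] by (simp add: emeasure_density)

lemma Phi_0: "Phi 0 = 1 / 2"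
proof -
  have "ennreal (2 * Phi 0) = 1"
    using nn_integral_std_normal_abs_ge[of 0] nn_integral_normal_density[of 1 0] by simp
  then show ?thesis
    using Phi_nonneg[of 0] by (simp add: ennreal_eq_1)
qed

lemma nn_integral_normal_abs_ge:
  assumes "0 \<le> r" "0 < s"
  shows "(\<integral>\<^sup>+z. indicator {z. r \<le> \<bar>z\<bar>} z * ennreal (normal_density 0 s z) \<partial>lborel)
    = ennreal (2 * Phi (- (r / s)))"
proof -
  have scale: "s * normal_density 0 s (s * u) = std_normal_density u" for u
    using assms by (simp add: normal_density_def real_sqrt_mult power_mult_distrib field_simps)
  have "(\<integral>\<^sup>+z. indicator {z. r \<le> \<bar>z\<bar>} z * ennreal (normal_density 0 s z) \<partial>lborel)
      = s * (\<integral>\<^sup>+u. indicator {z. r \<le> \<bar>z\<bar>} (0 + s * u) * ennreal (normal_density 0 s (0 + s * u)) \<partial>lborel)"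
    using assms by (subst nn_integral_real_affine[where c=s and t=0]) auto
  also have "\<dots> = (\<integral>\<^sup>+u. indicator {u. r / s \<le> \<bar>u\<bar>} u * ennreal (std_normal_density u) \<partial>lborel)"
    using assms
    by (subst nn_integral_cmult[symmetric])
       (auto intro!: nn_integral_cong simp: indicator_def ennreal_mult'[symmetric] abs_mult
         scale[symmetric] field_simps)
  also have "\<dots> = ennreal (2 * Phi (- (r / s)))"
    using assms by (intro nn_integral_std_normal_abs_ge) auto
  finally show ?thesis .
qed

lemma nn_integral_normal_diff_abs_ge:
  assumes a: "0 < a" and b: "0 < b" and r: "0 \<le> r"
  shows "(\<integral>\<^sup>+x. \<integral>\<^sup>+y. ennreal (normal_density \<mu> a x * normal_density \<mu> b y)
            * indicator {z. r \<le> \<bar>z\<bar>} (x - y) \<partial>lborel \<partial>lborel)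
     = ennreal (2 * Phi (- (r / sqrt (a\<^sup>2 + b\<^sup>2))))"
proof -
  let ?I = "indicator {z. r \<le> \<bar>z\<bar>} :: real \<Rightarrow> ennreal"
  let ?g = "\<lambda>x y. ennreal (normal_density \<mu> a x * normal_density \<mu> b y)"
  have conv: "(\<integral>\<^sup>+y. ?g (y + z) y \<partial>lborel) = ennreal (normal_density 0 (sqrt (a\<^sup>2 + b\<^sup>2)) z)" for z
  proof -
    have "(\<integral>\<^sup>+y. ?g (y + z) y \<partial>lborel) = (\<integral>\<^sup>+w. ?g ((\<mu> + (- 1) * w) + z) (\<mu> + (- 1) * w) \<partial>lborel)"
      by (subst nn_integral_real_affine[where c="-1" and t=\<mu>]) auto
    also have "\<dots> = (\<integral>\<^sup>+w. ennreal (normal_density 0 a (z - w) * normal_density 0 b w) \<partial>lborel)"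
      by (rule nn_integral_cong) (simp add: normal_density_def power2_eq_square algebra_simps)
    also have "\<dots> = ennreal (normal_density 0 (sqrt (a\<^sup>2 + b\<^sup>2)) z)"
      using conv_normal_density_zero_mean[OF a b] by metis
    finally show ?thesis .
  qed
  have "(\<integral>\<^sup>+x. \<integral>\<^sup>+y. ?g x y * ?I (x - y) \<partial>lborel \<partial>lborel)
      = (\<integral>\<^sup>+y. \<integral>\<^sup>+x. ?g x y * ?I (x - y) \<partial>lborel \<partial>lborel)"
    by (rule lborel_pair.Fubini'[symmetric]) simp
  also have "\<dots> = (\<integral>\<^sup>+y. \<integral>\<^sup>+z. ?g (y + z) y * ?I ((y + z) - y) \<partial>lborel \<partial>lborel)"
    by (intro nn_integral_cong nn_integral_lborel_shift[symmetric]) simp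
  also have "\<dots> = (\<integral>\<^sup>+z. \<integral>\<^sup>+y. ?I z * ?g (y + z) y \<partial>lborel \<partial>lborel)"
    by (subst lborel_pair.Fubini') (simp_all add: mult.commute)
  also have "\<dots> = (\<integral>\<^sup>+z. ?I z * ennreal (normal_density 0 (sqrt (a\<^sup>2 + b\<^sup>2)) z) \<partial>lborel)"
    by (intro nn_integral_cong) (simp add: nn_integral_cmult conv)
  also have "\<dots> = ennreal (2 * Phi (- (r / sqrt (a\<^sup>2 + b\<^sup>2))))"
    using a b r by (intro nn_integral_normal_abs_ge) (auto intro: add_pos_pos)
  finally show ?thesis .
qed

section \<open>The scaled chi-square density\<close>

lemma borel_measurable_p_nu [measurable (raw)]:
  assumes [measurable]: "f \<in> borel_measurable M" "g \<in> borel_measurable M"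
  shows "(\<lambda>x. p_nu \<nu> (f x) (g x)) \<in> borel_measurable M"
  unfolding p_nu_def by measurable

lemma p_nu_nonneg: "0 < \<nu> \<Longrightarrow> 0 < \<sigma> \<Longrightarrow> 0 \<le> p_nu \<nu> s \<sigma>"
  unfolding p_nu_def by auto

lemma p_nu_pos: "0 < \<nu> \<Longrightarrow> 0 < s \<Longrightarrow> 0 < \<sigma> \<Longrightarrow> 0 < p_nu \<nu> s \<sigma>"
  unfolding p_nu_def by auto

text \<open>Substituting \<open>s = (2\<sigma>/\<nu>) u\<close> turns \<open>p_nu\<close> into the Gamma density with shape \<open>\<nu>/2\<close>.\<close>

lemma p_nu_rescaled:
  assumes \<nu>: "0 < \<nu>" and \<sigma>: "0 < \<sigma>"
  shows "2 * \<sigma> / \<nu> * p_nu \<nu> (2 * \<sigma> / \<nu> * u) \<sigma>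
    = u powr (\<nu> / 2 - 1) / exp u * indicator {0..} u / Gamma (\<nu> / 2)"
proof -
  define k where "k = \<nu> / 2"
  define c where "c = 2 * \<sigma> / \<nu>"
  have c: "0 < c"
    using \<nu> \<sigma> by (simp add: c_def)
  have "c * p_nu \<nu> (c * u) \<sigma> = u powr (k - 1) / exp u * indicator {0..} u / Gamma k"
  proof (cases "0 < u")
    case True
    have e1: "\<nu> * (c * u) / \<sigma> = 2 * u" and e2: "- \<nu> * (c * u) / (2 * \<sigma>) = - u"
      and e3: "c * (\<nu> / \<sigma>) = 2"
      using \<nu> \<sigma> by (simp_all add: c_def field_simps)
    have e4: "(2 * u) powr (k - 1) = 2 powr (k - 1) * u powr (k - 1)"
      using True by (simp add: powr_mult)
    have e5: "2 * 2 powr (k - 1) = (2 powr k :: real)"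
      by (simp add: powr_diff)
    have "c * p_nu \<nu> (c * u) \<sigma> = c * (\<nu> / \<sigma>) * (1 / (2 powr k * Gamma k)) * (2 * u) powr (k - 1) * exp (- u)"
      using True c unfolding p_nu_def k_def[symmetric] e1 e2 by (simp add: mult_ac)
    also have "\<dots> = (2 * 2 powr (k - 1)) / 2 powr k * (1 / Gamma k) * u powr (k - 1) * exp (- u)"
      unfolding e3 e4 by (simp add: field_simps)
    also have "\<dots> = u powr (k - 1) / exp u * indicator {0..} u / Gamma k"
      unfolding e5 using True by (simp add: exp_minus field_simps)
    finally show ?thesis .
  next
    case False
    then have "c * u \<le> 0"
      using c by (simp add: mult_nonneg_nonpos)
    then show ?thesis
      using False by (auto simp: p_nu_def indicator_def)
  qed
  then show ?thesis
    by (simp add: k_def c_def)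
qed

lemma nn_integral_p_nu:
  assumes \<nu>: "0 < \<nu>" and \<sigma>: "0 < \<sigma>"
  shows "(\<integral>\<^sup>+s. ennreal (p_nu \<nu> s \<sigma>) \<partial>lborel) = 1"
proof -
  define c where "c = 2 * \<sigma> / \<nu>"
  have k: "0 < \<nu> / 2" and c: "0 < c"
    using \<nu> \<sigma> by (auto simp: c_def)
  have "(\<integral>\<^sup>+s. ennreal (p_nu \<nu> s \<sigma>) \<partial>lborel) = c * (\<integral>\<^sup>+u. ennreal (p_nu \<nu> (0 + c * u) \<sigma>) \<partial>lborel)"
    using c by (subst nn_integral_real_affine[where c=c and t=0]) auto
  also have "\<dots> = (\<integral>\<^sup>+u. ennreal (c * p_nu \<nu> (c * u) \<sigma>) \<partial>lborel)"
    using c by (subst nn_integral_cmult[symmetric]) (auto simp: ennreal_mult' intro!: nn_integral_cong)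
  also have "\<dots> = (\<integral>\<^sup>+u. ennreal (1 / Gamma (\<nu> / 2)) * (ennreal (u powr (\<nu> / 2 - 1) / exp u) * indicator {0..} u) \<partial>lborel)"
    unfolding c_def p_nu_rescaled[OF assms] using k
    by (intro nn_integral_cong) (auto simp: ennreal_mult'[symmetric] indicator_def)
  also have "\<dots> = ennreal (1 / Gamma (\<nu> / 2)) * ennreal (Gamma (\<nu> / 2))"
    by (subst nn_integral_cmult)
       (auto simp: nn_integral_has_integral_lebesgue'[OF _ Gamma_integral_real[OF k]])
  also have "\<dots> = 1"
    using Gamma_real_pos[OF k] by (simp add: ennreal_mult[symmetric])
  finally show ?thesis .
qed

lemma powr_le_exp_half:
  fixes x k :: real
  assumes x: "0 < x" and k: "0 < k"
  shows "x powr k \<le> (2 * k) powr k * exp (x / 2)"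
proof -
  define y where "y = x / (2 * k)"
  have "y \<le> exp y"
    using exp_ge_add_one_self[of y] by linarith
  then have "y powr k \<le> (exp y) powr k"
    using x k by (intro powr_mono2) (auto simp: y_def)
  also have "\<dots> = exp (x / 2)"
    using k by (simp add: powr_def y_def field_simps)
  finally show ?thesis
    using x k by (simp add: y_def powr_divide divide_le_eq mult.commute)
qed

text \<open>The bound is uniform in \<open>\<sigma>\<close>, so the posterior normaliser is finite for every prior.\<close>

lemma p_nu_le:
  assumes \<nu>: "0 < \<nu>" and s: "0 < s" and \<sigma>: "0 < \<sigma>"
  shows "p_nu \<nu> s \<sigma> \<le> \<nu> powr (\<nu> / 2) / (2 powr (\<nu> / 2) * Gamma (\<nu> / 2) * s)"
proof -
  define x where "x = \<nu> * s / \<sigma>"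
  define K where "K = 1 / (2 powr (\<nu> / 2) * Gamma (\<nu> / 2))"
  have x: "0 < x" and K: "0 \<le> K"
    using \<nu> s \<sigma> by (auto simp: x_def K_def)
  have "p_nu \<nu> s \<sigma> = K / s * (x * x powr (\<nu> / 2 - 1)) * exp (- x / 2)"
    using s \<sigma> unfolding p_nu_def K_def[symmetric] x_def by (simp add: field_simps)
  also have "x * x powr (\<nu> / 2 - 1) = x powr (\<nu> / 2)"
    using x by (simp add: powr_diff)
  also have "K / s * x powr (\<nu> / 2) * exp (- x / 2) \<le> K / s * (\<nu> powr (\<nu> / 2) * exp (x / 2)) * exp (- x / 2)"
    using powr_le_exp_half[OF x, of "\<nu> / 2"] \<nu> K s by (intro mult_right_mono mult_left_mono) auto
  also have "\<dots> = \<nu> powr (\<nu> / 2) / (2 powr (\<nu> / 2) * Gamma (\<nu> / 2) * s)"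
    by (simp add: K_def exp_minus field_simps)
  finally show ?thesis .
qed

section \<open>The p-value for known variances\<close>

lemma borel_measurable_PDV [measurable (raw)]:
  assumes [measurable]: "t \<in> borel_measurable M" "f \<in> borel_measurable M" "g \<in> borel_measurable M"
    "h \<in> M \<rightarrow>\<^sub>M borel \<Otimes>\<^sub>M borel"
  shows "(\<lambda>x. PDV KA KB (t x) (f x) (g x) (h x)) \<in> borel_measurable M"
  unfolding PDV_def by measurable

lemma borel_measurable_p_joint [measurable (raw)]:
  assumes [measurable]: "f \<in> borel_measurable M" "g \<in> borel_measurable M" "h \<in> M \<rightarrow>\<^sub>M borel \<Otimes>\<^sub>M borel"
  shows "(\<lambda>x. p_joint KA KB (f x) (g x) (h x)) \<in> borel_measurable M"
  unfolding p_joint_def by measurable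

lemma PDV_nonneg: "0 \<le> PDV KA KB t sA sB \<sigma>"
  by (simp add: PDV_def Phi_nonneg)

lemma PDV_le_2: "PDV KA KB t sA sB \<sigma> \<le> 2"
  by (simp add: PDV_def Phi_le_1)

lemma PDV_0: "PDV KA KB 0 sA sB \<sigma> = 1"
  by (simp add: PDV_def Phi_0)

lemma PDV_antimono:
  assumes "\<bar>t\<bar> \<le> \<bar>t'\<bar>" "0 \<le> sA" "0 \<le> sB" "0 < fst \<sigma>" "0 < snd \<sigma>"
  shows "PDV KA KB t' sA sB \<sigma> \<le> PDV KA KB t sA sB \<sigma>"
  unfolding PDV_def using assms
  by (intro mult_left_mono Phi_mono mult_right_mono) (auto intro!: divide_nonneg_pos add_pos_nonneg)

lemma isCont_PDV: "isCont (\<lambda>t. PDV KA KB t sA sB \<sigma>) t"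
  unfolding PDV_def by (intro continuous_intros isCont_o2[OF _ isCont_Phi])

lemma PDV_tendsto_0:
  assumes "0 < KA" "0 < KB" "0 < sA" "0 < sB" "0 < fst \<sigma>" "0 < snd \<sigma>"
  shows "((\<lambda>t. PDV KA KB t sA sB \<sigma>) \<longlongrightarrow> 0) at_top"
proof -
  define q where "q = sqrt ((sA / real KA + sB / real KB) / (fst \<sigma> / real KA + snd \<sigma> / real KB))"
  have "0 < q"
    using assms by (simp add: q_def add_pos_pos)
  then have "filterlim (\<lambda>t. \<bar>t\<bar> * q) at_top at_top"
    by (intro filterlim_at_top_mult_tendsto_pos[OF tendsto_const _ filterlim_abs_real])
  then have "filterlim (\<lambda>t. - \<bar>t\<bar> * q) at_bot at_top"
    by (simp add: filterlim_uminus_at_bot)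
  then have "((\<lambda>t. 2 * Phi (- \<bar>t\<bar> * q)) \<longlongrightarrow> 2 * 0) at_top"
    by (intro tendsto_mult tendsto_const filterlim_compose[OF Phi_at_bot])
  then show ?thesis
    by (simp add: PDV_def q_def)
qed

lemma sublevel_set_antimono_abs:
  fixes G :: "real \<Rightarrow> real"
  assumes cont: "\<And>t. isCont G t"
    and antimono: "\<And>s t. \<bar>s\<bar> \<le> \<bar>t\<bar> \<Longrightarrow> G t \<le> G s"
    and lim: "(G \<longlongrightarrow> 0) at_top"
    and \<alpha>: "0 < \<alpha>" "\<alpha> < G 0"
  obtains t0 where "0 \<le> t0" "G t0 = \<alpha>" "\<And>t. G t \<le> \<alpha> \<longleftrightarrow> t0 \<le> \<bar>t\<bar>"
proof -
  define S where "S = {t. 0 \<le> t \<and> G t \<le> \<alpha>}"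
  have "\<forall>\<^sub>F t in at_top. G t < \<alpha>"
    using lim \<alpha>(1) by (rule order_tendstoD)
  then obtain T where T: "\<And>t. T \<le> t \<Longrightarrow> G t < \<alpha>"
    by (auto simp: eventually_at_top_linorder)
  have "max T 0 \<in> S"
    using T[of "max T 0"] by (simp add: S_def)
  moreover have bdd: "bdd_below S"
    by (auto simp: S_def bdd_below_def)
  moreover have cont_on: "continuous_on A G" for A
    using cont by (simp add: continuous_at_imp_continuous_on)
  then have "closed S"
    unfolding S_def by (intro closed_Collect_conj closed_Collect_le continuous_on_id continuous_on_const)
  ultimately have t0: "Inf S \<in> S"
    by (intro closed_contains_Inf) auto
  then have "G (Inf S) \<le> \<alpha>" "0 \<le> Inf S"
    by (simp_all add: S_def)
  then obtain x where x: "0 \<le> x" "x \<le> Inf S" "G x = \<alpha>"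
    using IVT2'[of G "Inf S" \<alpha> 0] \<alpha>(2) cont_on by auto
  then have "Inf S \<le> x"
    using bdd by (intro cInf_lower) (simp_all add: S_def)
  with x have G_t0: "G (Inf S) = \<alpha>"
    by simp
  have "G t \<le> \<alpha> \<longleftrightarrow> Inf S \<le> \<bar>t\<bar>" for t
  proof
    assume "G t \<le> \<alpha>"
    moreover have "G \<bar>t\<bar> = G t"
      using antimono[of t "\<bar>t\<bar>"] antimono[of "\<bar>t\<bar>" t] by simp
    ultimately show "Inf S \<le> \<bar>t\<bar>"
      using bdd by (intro cInf_lower) (simp_all add: S_def)
  next
    assume "Inf S \<le> \<bar>t\<bar>"
    then show "G t \<le> \<alpha>"
      using \<open>0 \<le> Inf S\<close> G_t0 antimono[of "Inf S" t] by simp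
  qed
  then show ?thesis
    using \<open>0 \<le> Inf S\<close> G_t0 by (intro that)
qed

lemma nn_integral_lborel4:
  assumes [measurable]: "g \<in> borel_measurable (lborel \<Otimes>\<^sub>M lborel \<Otimes>\<^sub>M lborel \<Otimes>\<^sub>M (lborel :: real measure))"
  shows "(\<integral>\<^sup>+y. g y \<partial>(lborel \<Otimes>\<^sub>M lborel \<Otimes>\<^sub>M lborel \<Otimes>\<^sub>M lborel))
    = (\<integral>\<^sup>+sA. \<integral>\<^sup>+sB. \<integral>\<^sup>+mA. \<integral>\<^sup>+mB. g (mA, sA, mB, sB) \<partial>lborel \<partial>lborel \<partial>lborel \<partial>lborel)"
proof -
  have "(\<integral>\<^sup>+y. g y \<partial>(lborel \<Otimes>\<^sub>M lborel \<Otimes>\<^sub>M lborel \<Otimes>\<^sub>M lborel))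
      = (\<integral>\<^sup>+mA. \<integral>\<^sup>+z. g (mA, z) \<partial>(lborel \<Otimes>\<^sub>M lborel \<Otimes>\<^sub>M lborel) \<partial>lborel)"
    by (intro sigma_finite_measure.nn_integral_fst[symmetric] sigma_finite_pair_measure
        lborel.sigma_finite_measure_axioms) simp
  also have "\<dots> = (\<integral>\<^sup>+mA. \<integral>\<^sup>+sA. \<integral>\<^sup>+z. g (mA, sA, z) \<partial>(lborel \<Otimes>\<^sub>M lborel) \<partial>lborel \<partial>lborel)"
    by (intro nn_integral_cong sigma_finite_measure.nn_integral_fst[symmetric] sigma_finite_pair_measure
        lborel.sigma_finite_measure_axioms) simp
  also have "\<dots> = (\<integral>\<^sup>+mA. \<integral>\<^sup>+sA. \<integral>\<^sup>+mB. \<integral>\<^sup>+sB. g (mA, sA, mB, sB) \<partial>lborel \<partial>lborel \<partial>lborel \<partial>lborel)"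
    by (intro nn_integral_cong lborel.nn_integral_fst[symmetric]) simp
  also have "\<dots> = (\<integral>\<^sup>+mA. \<integral>\<^sup>+sA. \<integral>\<^sup>+sB. \<integral>\<^sup>+mB. g (mA, sA, mB, sB) \<partial>lborel \<partial>lborel \<partial>lborel \<partial>lborel)"
    by (intro nn_integral_cong lborel_pair.Fubini') simp
  also have "\<dots> = (\<integral>\<^sup>+sA. \<integral>\<^sup>+mA. \<integral>\<^sup>+sB. \<integral>\<^sup>+mB. g (mA, sA, mB, sB) \<partial>lborel \<partial>lborel \<partial>lborel \<partial>lborel)"
    by (rule lborel_pair.Fubini'[symmetric]) simp
  also have "\<dots> = (\<integral>\<^sup>+sA. \<integral>\<^sup>+sB. \<integral>\<^sup>+mA. \<integral>\<^sup>+mB. g (mA, sA, mB, sB) \<partial>lborel \<partial>lborel \<partial>lborel \<partial>lborel)"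
    by (intro nn_integral_cong lborel_pair.Fubini'[symmetric]) simp
  finally show ?thesis .
qed

lemma prob_space_density_pair:
  assumes "prob_space M" "sigma_finite_measure N" and [measurable]: "f \<in> borel_measurable (M \<Otimes>\<^sub>M N)"
    and "AE x in M. (\<integral>\<^sup>+y. f (x, y) \<partial>N) = 1"
  shows "prob_space (density (M \<Otimes>\<^sub>M N) f)"
proof (rule prob_spaceI)
  interpret M: prob_space M by fact
  interpret N: sigma_finite_measure N by fact
  have "emeasure (density (M \<Otimes>\<^sub>M N) f) (space (M \<Otimes>\<^sub>M N)) = (\<integral>\<^sup>+x. \<integral>\<^sup>+y. f (x, y) \<partial>N \<partial>M)"
    by (simp add: emeasure_density N.nn_integral_fst)
  also have "\<dots> = (\<integral>\<^sup>+x. 1 \<partial>M)"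
    by (rule nn_integral_cong_AE) fact
  finally show "emeasure (density (M \<Otimes>\<^sub>M N) f) (space (density (M \<Otimes>\<^sub>M N) f)) = 1"
    by (simp add: M.emeasure_space_1)
qed

lemma real_cond_exp_indicator_eq_const:
  assumes "prob_space M" and A: "A \<in> sets M" and X: "X \<in> M \<rightarrow>\<^sub>M N"
    and proportional: "\<And>B. B \<in> sets N \<Longrightarrow> measure M (A \<inter> (X -` B \<inter> space M)) = \<alpha> * measure M (X -` B \<inter> space M)"
  shows "AE \<omega> in M. real_cond_exp M (vimage_algebra (space M) X N) (indicator A) \<omega> = \<alpha>"
proof -
  interpret prob_space M by fact
  have "subalgebra M (vimage_algebra (space M) X N)"
    unfolding subalgebra_def using sets_image_in_sets[OF refl X] by simp
  then interpret finite_measure_subalgebra M "vimage_algebra (space M) X N"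
    by unfold_locales
  show ?thesis
  proof (rule real_cond_exp_charact)
    fix C assume "C \<in> sets (vimage_algebra (space M) X N)"
    moreover have "sets (vimage_algebra (space M) X N) = {X -` B \<inter> space M | B. B \<in> sets N}"
      using measurable_space[OF X] by (intro sets_vimage_algebra2) auto
    ultimately obtain B where B: "B \<in> sets N" and C: "C = X -` B \<inter> space M"
      by auto
    then have "C \<in> sets M"
      using X by auto
    then show "(\<integral>x\<in>C. indicator A x \<partial>M) = (\<integral>x\<in>C. \<alpha> \<partial>M)"
      using proportional[OF B] A
      by (simp add: C set_integral_const emeasure_eq_measure Int_commute indicator_inter_arith[symmetric]
          set_lebesgue_integral_def)
  qed (use A in \<open>auto simp: emeasure_eq_measure\<close>)
qed

section \<open>The posterior p-value\<close>

locale bf_prior =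
  fixes H :: "(real \<times> real) measure" and KA KB :: nat
  assumes KA: "2 \<le> KA" and KB: "2 \<le> KB"
    and prob_space_H: "prob_space H"
    and sets_H: "sets H = sets (borel :: (real \<times> real) measure)"
    and AE_pos: "AE \<sigma> in H. 0 < fst \<sigma> \<and> 0 < snd \<sigma>"
begin

sublocale H: prob_space H
  by (rule prob_space_H)

lemma sets_H_pair [measurable_cong]: "sets H = sets (borel \<Otimes>\<^sub>M borel :: (real \<times> real) measure)"
  unfolding borel_prod by (rule sets_H)

lemma space_H: "space H = UNIV"
  using sets_eq_imp_space_eq[OF sets_H] by simp

lemma p_joint_nonneg: "0 < fst \<sigma> \<Longrightarrow> 0 < snd \<sigma> \<Longrightarrow> 0 \<le> p_joint KA KB sA sB \<sigma>"
  using KA KB by (simp add: p_joint_def p_nu_nonneg)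

context
  fixes sA sB :: real
  assumes sA: "0 < sA" and sB: "0 < sB"
begin

lemma AE_p_joint_pos: "AE \<sigma> in H. 0 < p_joint KA KB sA sB \<sigma>"
  using AE_pos by eventually_elim (use KA KB sA sB in \<open>simp add: p_joint_def p_nu_pos\<close>)

lemma integrable_p_joint: "integrable H (p_joint KA KB sA sB)"
proof (rule H.integrable_const_bound)
  let ?C = "\<lambda>K s. (real K - 1) powr ((real K - 1) / 2)
      / (2 powr ((real K - 1) / 2) * Gamma ((real K - 1) / 2) * s)"
  show "AE \<sigma> in H. norm (p_joint KA KB sA sB \<sigma>) \<le> ?C KA sA * ?C KB sB"
    using AE_pos
  proof eventually_elim
    case (elim \<sigma>)
    have "p_nu (real KA - 1) sA (fst \<sigma>) * p_nu (real KB - 1) sB (snd \<sigma>) \<le> ?C KA sA * ?C KB sB"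
      using KA KB sA sB elim by (intro mult_mono' p_nu_le p_nu_nonneg) auto
    then show ?case
      using p_joint_nonneg[of \<sigma> sA sB] elim by (simp add: p_joint_def)
  qed
qed measurable

lemma integral_p_joint_pos: "0 < (\<integral>\<sigma>. p_joint KA KB sA sB \<sigma> \<partial>H)"
proof -
  have nonneg: "AE \<sigma> in H. 0 \<le> p_joint KA KB sA sB \<sigma>"
    using AE_p_joint_pos by eventually_elim simp
  have "(\<integral>\<sigma>. p_joint KA KB sA sB \<sigma> \<partial>H) \<noteq> 0"
  proof
    assume "(\<integral>\<sigma>. p_joint KA KB sA sB \<sigma> \<partial>H) = 0"
    then have "AE \<sigma> in H. p_joint KA KB sA sB \<sigma> = 0"
      using integral_nonneg_eq_0_iff_AE[OF integrable_p_joint nonneg] by simp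
    with AE_p_joint_pos have "AE \<sigma> in H. False"
      by eventually_elim simp
    then show False
      by (simp add: H.AE_False)
  qed
  with integral_nonneg_AE[OF nonneg] show ?thesis
    by simp
qed

lemma AE_PDV_p_joint_le: "AE \<sigma> in H. norm (PDV KA KB t sA sB \<sigma> * p_joint KA KB sA sB \<sigma>) \<le> 2 * p_joint KA KB sA sB \<sigma>"
  using AE_p_joint_pos
  by eventually_elim (auto simp: abs_mult PDV_nonneg intro!: mult_right_mono PDV_le_2)

lemma integrable_PDV_p_joint: "integrable H (\<lambda>\<sigma>. PDV KA KB t sA sB \<sigma> * p_joint KA KB sA sB \<sigma>)"
proof (rule Bochner_Integration.integrable_bound)
  show "integrable H (\<lambda>\<sigma>. 2 * p_joint KA KB sA sB \<sigma>)"
    using integrable_p_joint by simp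
  show "AE \<sigma> in H. norm (PDV KA KB t sA sB \<sigma> * p_joint KA KB sA sB \<sigma>) \<le> norm (2 * p_joint KA KB sA sB \<sigma>)"
    using AE_PDV_p_joint_le[of t] by eventually_elim (erule order_trans, simp)
qed measurable

lemma PDV_H_0: "PDV_H KA KB H 0 sA sB = 1"
  using integral_p_joint_pos by (simp add: PDV_H_def PDV_0)

lemma PDV_H_antimono:
  assumes "\<bar>t\<bar> \<le> \<bar>t'\<bar>"
  shows "PDV_H KA KB H t' sA sB \<le> PDV_H KA KB H t sA sB"
proof -
  have "AE \<sigma> in H. PDV KA KB t' sA sB \<sigma> * p_joint KA KB sA sB \<sigma> \<le> PDV KA KB t sA sB \<sigma> * p_joint KA KB sA sB \<sigma>"
    using AE_pos AE_p_joint_pos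
    by eventually_elim (use assms sA sB in \<open>auto intro!: mult_right_mono PDV_antimono\<close>)
  then show ?thesis
    unfolding PDV_H_def using integral_p_joint_pos
    by (intro divide_right_mono integral_mono_AE integrable_PDV_p_joint) auto
qed

lemma isCont_PDV_H: "isCont (\<lambda>t. PDV_H KA KB H t sA sB) t"
proof (rule continuous_at_sequentiallyI)
  fix u :: "nat \<Rightarrow> real"
  assume u: "u \<longlonglongrightarrow> t"
  have "(\<lambda>n. \<integral>\<sigma>. PDV KA KB (u n) sA sB \<sigma> * p_joint KA KB sA sB \<sigma> \<partial>H)
      \<longlonglongrightarrow> (\<integral>\<sigma>. PDV KA KB t sA sB \<sigma> * p_joint KA KB sA sB \<sigma> \<partial>H)"
  proof (rule integral_dominated_convergence)
    show "integrable H (\<lambda>\<sigma>. 2 * p_joint KA KB sA sB \<sigma>)"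
      using integrable_p_joint by simp
    show "AE \<sigma> in H. (\<lambda>n. PDV KA KB (u n) sA sB \<sigma> * p_joint KA KB sA sB \<sigma>)
        \<longlonglongrightarrow> PDV KA KB t sA sB \<sigma> * p_joint KA KB sA sB \<sigma>"
      by (intro AE_I2 tendsto_mult tendsto_const isCont_tendsto_compose[OF isCont_PDV u])
    show "AE \<sigma> in H. norm (PDV KA KB (u n) sA sB \<sigma> * p_joint KA KB sA sB \<sigma>) \<le> 2 * p_joint KA KB sA sB \<sigma>" for n
      by (rule AE_PDV_p_joint_le)
  qed measurable
  then show "(\<lambda>n. PDV_H KA KB H (u n) sA sB) \<longlonglongrightarrow> PDV_H KA KB H t sA sB"
    unfolding PDV_H_def by (intro tendsto_divide tendsto_const) (use integral_p_joint_pos in auto)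
qed

lemma PDV_H_tendsto_0: "((\<lambda>t. PDV_H KA KB H t sA sB) \<longlongrightarrow> 0) at_top"
proof -
  have "((\<lambda>t. \<integral>\<sigma>. PDV KA KB t sA sB \<sigma> * p_joint KA KB sA sB \<sigma> \<partial>H) \<longlongrightarrow> (\<integral>\<sigma>. 0 \<partial>H)) at_top"
  proof (rule integral_dominated_convergence_at_top)
    show "integrable H (\<lambda>\<sigma>. 2 * p_joint KA KB sA sB \<sigma>)"
      using integrable_p_joint by simp
    show "\<forall>\<^sub>F t in at_top. AE \<sigma> in H. norm (PDV KA KB t sA sB \<sigma> * p_joint KA KB sA sB \<sigma>) \<le> 2 * p_joint KA KB sA sB \<sigma>"
      by (intro always_eventually allI AE_PDV_p_joint_le)
    show "AE \<sigma> in H. ((\<lambda>t. PDV KA KB t sA sB \<sigma> * p_joint KA KB sA sB \<sigma>) \<longlongrightarrow> 0) at_top"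
      using AE_pos
      by eventually_elim (use KA KB sA sB in \<open>auto intro!: tendsto_mult_left_zero PDV_tendsto_0\<close>)
  qed measurable
  then show ?thesis
    unfolding PDV_H_def by (auto intro: tendsto_divide_zero)
qed

lemma PDV_H_le_iff:
  assumes "0 < \<alpha>" "\<alpha> < 1"
  obtains t0 where "0 \<le> t0" "PDV_H KA KB H t0 sA sB = \<alpha>" "\<And>t. PDV_H KA KB H t sA sB \<le> \<alpha> \<longleftrightarrow> t0 \<le> \<bar>t\<bar>"
proof -
  have "\<alpha> < PDV_H KA KB H 0 sA sB"
    using assms by (simp add: PDV_H_0)
  from sublevel_set_antimono_abs[OF isCont_PDV_H PDV_H_antimono PDV_H_tendsto_0 assms(1) this] that
  show ?thesis
    by blast
qed

lemma nn_integral_PDV_p_joint: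
  "(\<integral>\<^sup>+\<sigma>. ennreal (PDV KA KB t sA sB \<sigma> * p_joint KA KB sA sB \<sigma>) \<partial>H)
    = ennreal (PDV_H KA KB H t sA sB) * (\<integral>\<^sup>+\<sigma>. ennreal (p_joint KA KB sA sB \<sigma>) \<partial>H)"
proof -
  have "AE \<sigma> in H. 0 \<le> PDV KA KB t sA sB \<sigma> * p_joint KA KB sA sB \<sigma>"
    using AE_p_joint_pos by eventually_elim (simp add: PDV_nonneg)
  then have "(\<integral>\<^sup>+\<sigma>. ennreal (PDV KA KB t sA sB \<sigma> * p_joint KA KB sA sB \<sigma>) \<partial>H)
      = ennreal (PDV_H KA KB H t sA sB * (\<integral>\<sigma>. p_joint KA KB sA sB \<sigma> \<partial>H))"
    using nn_integral_eq_integral[OF integrable_PDV_p_joint] integral_p_joint_pos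
    by (simp add: PDV_H_def)
  also have "\<dots> = ennreal (PDV_H KA KB H t sA sB) * (\<integral>\<^sup>+\<sigma>. ennreal (p_joint KA KB sA sB \<sigma>) \<partial>H)"
    using AE_p_joint_pos integral_p_joint_pos
    by (simp add: ennreal_mult'' nn_integral_eq_integral[OF integrable_p_joint] eventually_mono)
  finally show ?thesis .
qed

end

lemma borel_measurable_PDV_H [measurable (raw)]:
  assumes [measurable]: "f \<in> borel_measurable N" "g \<in> borel_measurable N" "h \<in> borel_measurable N"
  shows "(\<lambda>x. PDV_H KA KB H (f x) (g x) (h x)) \<in> borel_measurable N"
  unfolding PDV_H_def by measurable

end

section \<open>The hierarchical model\<close>

definition bf_density :: "nat \<Rightarrow> nat \<Rightarrow> real \<Rightarrow> real \<Rightarrow> bf_outcome \<Rightarrow> ennreal" where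
  "bf_density KA KB \<mu>A \<mu>B = (\<lambda>(\<sigma>, (mA, sA, mB, sB)). ennreal (
      normal_density \<mu>A (sqrt (fst \<sigma> / real KA)) mA * p_nu (real KA - 1) sA (fst \<sigma>)
    * normal_density \<mu>B (sqrt (snd \<sigma> / real KB)) mB * p_nu (real KB - 1) sB (snd \<sigma>)))"

lemma bf_model_eq_density:
  "bf_model H KA KB \<mu>A \<mu>B = density (H \<Otimes>\<^sub>M (lborel \<Otimes>\<^sub>M lborel \<Otimes>\<^sub>M lborel \<Otimes>\<^sub>M lborel)) (bf_density KA KB \<mu>A \<mu>B)"
  by (simp add: bf_model_def bf_density_def)

definition sighat :: "bf_outcome \<Rightarrow> real \<times> real" where
  "sighat \<omega> = (sighatA \<omega>, sighatB \<omega>)"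

lemma indicator_vimage_sighat:
  "indicator (sighat -` B) (\<sigma>, mA, sA, mB, sB) = (indicator B (sA, sB) :: 'a :: zero_neq_one)"
  by (simp add: sighat_def sighatA_def sighatB_def indicator_def)

context bf_prior
begin

lemma measurable_sighat [measurable]:
  "sighat \<in> H \<Otimes>\<^sub>M (lborel \<Otimes>\<^sub>M lborel \<Otimes>\<^sub>M lborel \<Otimes>\<^sub>M lborel) \<rightarrow>\<^sub>M borel"
  unfolding sighat_def sighatA_def sighatB_def borel_prod[symmetric] by measurable

definition pvalue :: "bf_outcome \<Rightarrow> real" where
  "pvalue \<omega> = PDV_H KA KB H (T_BF KA KB \<omega>) (sighatA \<omega>) (sighatB \<omega>)"

lemma borel_measurable_pvalue [measurable]:
  "pvalue \<in> borel_measurable (H \<Otimes>\<^sub>M (lborel \<Otimes>\<^sub>M lborel \<Otimes>\<^sub>M lborel \<Otimes>\<^sub>M lborel))"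
  unfolding pvalue_def T_BF_def muhatA_def muhatB_def sighatA_def sighatB_def by measurable

lemma borel_measurable_bf_density [measurable]:
  "bf_density KA KB \<mu>A \<mu>B \<in> borel_measurable (H \<Otimes>\<^sub>M (lborel \<Otimes>\<^sub>M lborel \<Otimes>\<^sub>M lborel \<Otimes>\<^sub>M lborel))"
  unfolding bf_density_def normal_density_def by measurable

lemma space_bf_model: "space (bf_model H KA KB \<mu>A \<mu>B) = UNIV"
  by (simp add: bf_model_eq_density space_pair_measure space_H)

lemma sets_bf_model:
  "sets (bf_model H KA KB \<mu>A \<mu>B) = sets (H \<Otimes>\<^sub>M (lborel \<Otimes>\<^sub>M lborel \<Otimes>\<^sub>M lborel \<Otimes>\<^sub>M lborel))"
  by (simp add: bf_model_eq_density)

lemma bf_density_eq_p_joint: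
  assumes "0 < fst \<sigma>" "0 < snd \<sigma>"
  shows "bf_density KA KB \<mu>A \<mu>B (\<sigma>, mA, sA, mB, sB) = ennreal (p_joint KA KB sA sB \<sigma>)
    * ennreal (normal_density \<mu>A (sqrt (fst \<sigma> / real KA)) mA * normal_density \<mu>B (sqrt (snd \<sigma> / real KB)) mB)"
  using p_joint_nonneg[OF assms, of sA sB]
  by (simp add: bf_density_def p_joint_def ennreal_mult'[symmetric] mult_ac)

lemma nn_integral_bf_density_muhat:
  assumes "0 < fst \<sigma>" "0 < snd \<sigma>"
  shows "(\<integral>\<^sup>+mA. \<integral>\<^sup>+mB. bf_density KA KB \<mu>A \<mu>B (\<sigma>, mA, sA, mB, sB) \<partial>lborel \<partial>lborel)
    = ennreal (p_joint KA KB sA sB \<sigma>)"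
proof -
  let ?a = "sqrt (fst \<sigma> / real KA)" and ?b = "sqrt (snd \<sigma> / real KB)"
  have a: "0 < ?a" and b: "0 < ?b"
    using assms KA KB by auto
  have "(\<integral>\<^sup>+mA. \<integral>\<^sup>+mB. bf_density KA KB \<mu>A \<mu>B (\<sigma>, mA, sA, mB, sB) \<partial>lborel \<partial>lborel)
      = (\<integral>\<^sup>+mA. ennreal (p_joint KA KB sA sB \<sigma>) * ennreal (normal_density \<mu>A ?a mA)
          * (\<integral>\<^sup>+mB. ennreal (normal_density \<mu>B ?b mB) \<partial>lborel) \<partial>lborel)"
    unfolding bf_density_eq_p_joint[OF assms]
    by (intro nn_integral_cong, subst nn_integral_cmult[symmetric]) (auto simp: ennreal_mult mult_ac)
  also have "\<dots> = ennreal (p_joint KA KB sA sB \<sigma>)"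
    using a b by (simp add: nn_integral_cmult nn_integral_normal_density)
  finally show ?thesis .
qed

lemma nn_integral_bf_density_abs_diff_ge:
  assumes \<sigma>: "0 < fst \<sigma>" "0 < snd \<sigma>" and "0 \<le> sA" "0 \<le> sB" "0 \<le> t"
  shows "(\<integral>\<^sup>+mA. \<integral>\<^sup>+mB. bf_density KA KB \<mu> \<mu> (\<sigma>, mA, sA, mB, sB)
            * indicator {z. t * sqrt (sA / real KA + sB / real KB) \<le> \<bar>z\<bar>} (mA - mB) \<partial>lborel \<partial>lborel)
    = ennreal (PDV KA KB t sA sB \<sigma> * p_joint KA KB sA sB \<sigma>)"
proof -
  let ?a = "sqrt (fst \<sigma> / real KA)" and ?b = "sqrt (snd \<sigma> / real KB)"
  let ?r = "t * sqrt (sA / real KA + sB / real KB)"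
  have ab: "0 < ?a" "0 < ?b" and r: "0 \<le> ?r"
    using assms KA KB by auto
  have "?a\<^sup>2 = fst \<sigma> / real KA" "?b\<^sup>2 = snd \<sigma> / real KB"
    using \<sigma> by simp_all
  then have "2 * Phi (- (?r / sqrt (?a\<^sup>2 + ?b\<^sup>2))) = PDV KA KB t sA sB \<sigma>"
    unfolding PDV_def using assms by (simp only:) (simp add: real_sqrt_divide)
  then have Gauss: "(\<integral>\<^sup>+mA. \<integral>\<^sup>+mB. ennreal (normal_density \<mu> ?a mA * normal_density \<mu> ?b mB)
      * indicator {z. ?r \<le> \<bar>z\<bar>} (mA - mB) \<partial>lborel \<partial>lborel) = ennreal (PDV KA KB t sA sB \<sigma>)"
    using nn_integral_normal_diff_abs_ge[OF ab r] by simp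
  have "(\<integral>\<^sup>+mA. \<integral>\<^sup>+mB. bf_density KA KB \<mu> \<mu> (\<sigma>, mA, sA, mB, sB) * indicator {z. ?r \<le> \<bar>z\<bar>} (mA - mB) \<partial>lborel \<partial>lborel)
      = (\<integral>\<^sup>+mA. ennreal (p_joint KA KB sA sB \<sigma>) * (\<integral>\<^sup>+mB. ennreal (normal_density \<mu> ?a mA * normal_density \<mu> ?b mB)
          * indicator {z. ?r \<le> \<bar>z\<bar>} (mA - mB) \<partial>lborel) \<partial>lborel)"
    unfolding bf_density_eq_p_joint[OF \<sigma>]
    by (intro nn_integral_cong, subst nn_integral_cmult[symmetric]) (auto simp: mult_ac)
  also have "\<dots> = ennreal (p_joint KA KB sA sB \<sigma>) * ennreal (PDV KA KB t sA sB \<sigma>)"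
    by (subst nn_integral_cmult) (auto simp: Gauss)
  also have "\<dots> = ennreal (PDV KA KB t sA sB \<sigma> * p_joint KA KB sA sB \<sigma>)"
    using PDV_nonneg p_joint_nonneg[OF \<sigma>] by (simp add: ennreal_mult mult.commute)
  finally show ?thesis .
qed

lemma prob_space_bf_model: "prob_space (bf_model H KA KB \<mu>A \<mu>B)"
  unfolding bf_model_eq_density
proof (rule prob_space_density_pair[OF prob_space_H])
  show "sigma_finite_measure (lborel \<Otimes>\<^sub>M lborel \<Otimes>\<^sub>M lborel \<Otimes>\<^sub>M (lborel :: real measure))"
    by (intro sigma_finite_pair_measure lborel.sigma_finite_measure_axioms)
  show "AE \<sigma> in H. (\<integral>\<^sup>+y. bf_density KA KB \<mu>A \<mu>B (\<sigma>, y) \<partial>(lborel \<Otimes>\<^sub>M lborel \<Otimes>\<^sub>M lborel \<Otimes>\<^sub>M lborel)) = 1"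
    using AE_pos
  proof eventually_elim
    case (elim \<sigma>)
    have "(\<integral>\<^sup>+y. bf_density KA KB \<mu>A \<mu>B (\<sigma>, y) \<partial>(lborel \<Otimes>\<^sub>M lborel \<Otimes>\<^sub>M lborel \<Otimes>\<^sub>M lborel))
        = (\<integral>\<^sup>+sA. \<integral>\<^sup>+sB. \<integral>\<^sup>+mA. \<integral>\<^sup>+mB. bf_density KA KB \<mu>A \<mu>B (\<sigma>, mA, sA, mB, sB) \<partial>lborel \<partial>lborel \<partial>lborel \<partial>lborel)"
      by (intro nn_integral_lborel4 measurable_Pair2[OF borel_measurable_bf_density]) (simp add: space_H)
    also have "\<dots> = (\<integral>\<^sup>+sA. \<integral>\<^sup>+sB. ennreal (p_nu (real KA - 1) sA (fst \<sigma>)) * ennreal (p_nu (real KB - 1) sB (snd \<sigma>)) \<partial>lborel \<partial>lborel)"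
      using elim KA KB
      by (simp add: nn_integral_bf_density_muhat p_joint_def ennreal_mult p_nu_nonneg)
    also have "\<dots> = 1"
      using elim KA KB by (simp add: nn_integral_cmult nn_integral_p_nu)
    finally show ?case .
  qed
qed simp

text \<open>Integrating over the sample variances last disintegrates the model along them.\<close>

lemma nn_integral_bf_model:
  assumes [measurable]: "h \<in> borel_measurable (H \<Otimes>\<^sub>M (lborel \<Otimes>\<^sub>M lborel \<Otimes>\<^sub>M lborel \<Otimes>\<^sub>M lborel))"
  shows "(\<integral>\<^sup>+\<omega>. h \<omega> \<partial>bf_model H KA KB \<mu>A \<mu>B) = (\<integral>\<^sup>+sA. \<integral>\<^sup>+sB. \<integral>\<^sup>+\<sigma>. \<integral>\<^sup>+mA. \<integral>\<^sup>+mB.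
      bf_density KA KB \<mu>A \<mu>B (\<sigma>, mA, sA, mB, sB) * h (\<sigma>, mA, sA, mB, sB) \<partial>lborel \<partial>lborel \<partial>H \<partial>lborel \<partial>lborel)"
proof -
  interpret HL: pair_sigma_finite H lborel
    by unfold_locales
  let ?f = "\<lambda>\<omega>. bf_density KA KB \<mu>A \<mu>B \<omega> * h \<omega>"
  have "(\<integral>\<^sup>+\<omega>. h \<omega> \<partial>bf_model H KA KB \<mu>A \<mu>B)
      = (\<integral>\<^sup>+\<sigma>. \<integral>\<^sup>+y. ?f (\<sigma>, y) \<partial>(lborel \<Otimes>\<^sub>M lborel \<Otimes>\<^sub>M lborel \<Otimes>\<^sub>M lborel) \<partial>H)"
    unfolding bf_model_eq_density
    by (simp add: nn_integral_density sigma_finite_measure.nn_integral_fst[symmetric]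
        sigma_finite_pair_measure lborel.sigma_finite_measure_axioms)
  also have "\<dots> = (\<integral>\<^sup>+\<sigma>. \<integral>\<^sup>+sA. \<integral>\<^sup>+sB. \<integral>\<^sup>+mA. \<integral>\<^sup>+mB. ?f (\<sigma>, mA, sA, mB, sB) \<partial>lborel \<partial>lborel \<partial>lborel \<partial>lborel \<partial>H)"
    by (intro nn_integral_cong nn_integral_lborel4) (simp add: space_H)
  also have "\<dots> = (\<integral>\<^sup>+sA. \<integral>\<^sup>+\<sigma>. \<integral>\<^sup>+sB. \<integral>\<^sup>+mA. \<integral>\<^sup>+mB. ?f (\<sigma>, mA, sA, mB, sB) \<partial>lborel \<partial>lborel \<partial>lborel \<partial>H \<partial>lborel)"
    by (rule HL.Fubini'[symmetric]) simp
  also have "\<dots> = (\<integral>\<^sup>+sA. \<integral>\<^sup>+sB. \<integral>\<^sup>+\<sigma>. \<integral>\<^sup>+mA. \<integral>\<^sup>+mB. ?f (\<sigma>, mA, sA, mB, sB) \<partial>lborel \<partial>lborel \<partial>H \<partial>lborel \<partial>lborel)"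
    by (intro nn_integral_cong HL.Fubini'[symmetric]) simp
  finally show ?thesis .
qed

lemma sets_pvalue_le [measurable]:
  "{\<omega>. pvalue \<omega> \<le> \<alpha>} \<in> sets (H \<Otimes>\<^sub>M (lborel \<Otimes>\<^sub>M lborel \<Otimes>\<^sub>M lborel \<Otimes>\<^sub>M lborel))"
proof -
  have "{\<omega> \<in> space (H \<Otimes>\<^sub>M (lborel \<Otimes>\<^sub>M lborel \<Otimes>\<^sub>M lborel \<Otimes>\<^sub>M lborel)). pvalue \<omega> \<le> \<alpha>}
      \<in> sets (H \<Otimes>\<^sub>M (lborel \<Otimes>\<^sub>M lborel \<Otimes>\<^sub>M lborel \<Otimes>\<^sub>M lborel))"
    by measurable
  then show ?thesis
    by (simp add: space_pair_measure space_H)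
qed

lemma nn_integral_sighat_fiber:
  "(\<integral>\<^sup>+\<sigma>. \<integral>\<^sup>+mA. \<integral>\<^sup>+mB. bf_density KA KB \<mu>A \<mu>B (\<sigma>, mA, sA, mB, sB)
            * indicator (sighat -` B) (\<sigma>, mA, sA, mB, sB) \<partial>lborel \<partial>lborel \<partial>H)
    = indicator B (sA, sB) * (\<integral>\<^sup>+\<sigma>. ennreal (p_joint KA KB sA sB \<sigma>) \<partial>H)"
proof (cases "(sA, sB) \<in> B")
  case True
  have "(\<integral>\<^sup>+\<sigma>. \<integral>\<^sup>+mA. \<integral>\<^sup>+mB. bf_density KA KB \<mu>A \<mu>B (\<sigma>, mA, sA, mB, sB) \<partial>lborel \<partial>lborel \<partial>H)
      = (\<integral>\<^sup>+\<sigma>. ennreal (p_joint KA KB sA sB \<sigma>) \<partial>H)"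
    using AE_pos by (intro nn_integral_cong_AE, eventually_elim) (simp add: nn_integral_bf_density_muhat)
  with True show ?thesis
    by (simp add: indicator_vimage_sighat)
qed (simp add: indicator_vimage_sighat)

lemma nn_integral_pvalue_le_fiber:
  assumes "0 < \<alpha>" "\<alpha> < 1"
  shows "(\<integral>\<^sup>+\<sigma>. \<integral>\<^sup>+mA. \<integral>\<^sup>+mB. bf_density KA KB \<mu> \<mu> (\<sigma>, mA, sA, mB, sB)
            * indicator {\<omega>. pvalue \<omega> \<le> \<alpha>} (\<sigma>, mA, sA, mB, sB) \<partial>lborel \<partial>lborel \<partial>H)
    = \<alpha> * (\<integral>\<^sup>+\<sigma>. ennreal (p_joint KA KB sA sB \<sigma>) \<partial>H)"
proof (cases "0 < sA \<and> 0 < sB")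
  case True
  then have sA: "0 < sA" and sB: "0 < sB"
    by auto
  obtain t0 where t0: "0 \<le> t0" "PDV_H KA KB H t0 sA sB = \<alpha>"
    and le_iff: "\<And>t. PDV_H KA KB H t sA sB \<le> \<alpha> \<longleftrightarrow> t0 \<le> \<bar>t\<bar>"
    using PDV_H_le_iff[OF sA sB assms] by blast
  let ?c = "sqrt (sA / real KA + sB / real KB)"
  have "0 < ?c"
    using sA sB KA KB by (simp add: add_pos_pos)
  then have "pvalue (\<sigma>, mA, sA, mB, sB) \<le> \<alpha> \<longleftrightarrow> t0 * ?c \<le> \<bar>mA - mB\<bar>" for \<sigma> mA mB
    by (simp add: pvalue_def T_BF_def muhatA_def muhatB_def sighatA_def sighatB_def le_iff abs_divide
        pos_le_divide_eq)
  then have "(\<integral>\<^sup>+\<sigma>. \<integral>\<^sup>+mA. \<integral>\<^sup>+mB. bf_density KA KB \<mu> \<mu> (\<sigma>, mA, sA, mB, sB)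
            * indicator {\<omega>. pvalue \<omega> \<le> \<alpha>} (\<sigma>, mA, sA, mB, sB) \<partial>lborel \<partial>lborel \<partial>H)
      = (\<integral>\<^sup>+\<sigma>. \<integral>\<^sup>+mA. \<integral>\<^sup>+mB. bf_density KA KB \<mu> \<mu> (\<sigma>, mA, sA, mB, sB)
            * indicator {z. t0 * ?c \<le> \<bar>z\<bar>} (mA - mB) \<partial>lborel \<partial>lborel \<partial>H)"
    by (simp add: indicator_def)
  also have "\<dots> = (\<integral>\<^sup>+\<sigma>. ennreal (PDV KA KB t0 sA sB \<sigma> * p_joint KA KB sA sB \<sigma>) \<partial>H)"
    using AE_pos
    by (intro nn_integral_cong_AE, eventually_elim)
       (simp add: nn_integral_bf_density_abs_diff_ge sA sB t0 less_imp_le)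
  also have "\<dots> = \<alpha> * (\<integral>\<^sup>+\<sigma>. ennreal (p_joint KA KB sA sB \<sigma>) \<partial>H)"
    by (simp add: nn_integral_PDV_p_joint[OF sA sB] t0)
  finally show ?thesis .
next
  case False
  then have "bf_density KA KB \<mu> \<mu> (\<sigma>, mA, sA, mB, sB) = 0" "p_joint KA KB sA sB \<sigma> = 0" for \<sigma> mA mB
    by (auto simp: bf_density_def p_joint_def p_nu_def)
  then show ?thesis
    by simp
qed

lemma measure_pvalue_le_sighat:
  assumes "0 < \<alpha>" "\<alpha> < 1" and B: "B \<in> sets borel"
  shows "measure (bf_model H KA KB \<mu> \<mu>) ({\<omega>. pvalue \<omega> \<le> \<alpha>} \<inter> sighat -` B)
    = \<alpha> * measure (bf_model H KA KB \<mu> \<mu>) (sighat -` B)"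
proof -
  let ?M = "bf_model H KA KB \<mu> \<mu>"
  let ?Z = "\<lambda>sA sB. \<integral>\<^sup>+\<sigma>. ennreal (p_joint KA KB sA sB \<sigma>) \<partial>H"
  let ?fiber = "\<lambda>A sA sB. \<integral>\<^sup>+\<sigma>. \<integral>\<^sup>+mA. \<integral>\<^sup>+mB. bf_density KA KB \<mu> \<mu> (\<sigma>, mA, sA, mB, sB)
            * indicator A (\<sigma>, mA, sA, mB, sB) \<partial>lborel \<partial>lborel \<partial>H"
  interpret M: prob_space ?M
    by (rule prob_space_bf_model)
  have sets_sighat: "sighat -` B \<in> sets (H \<Otimes>\<^sub>M (lborel \<Otimes>\<^sub>M lborel \<Otimes>\<^sub>M lborel \<Otimes>\<^sub>M lborel))"
    using measurable_sets[OF measurable_sighat B] by (simp add: space_pair_measure space_H)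
  have emeasure_eq: "emeasure ?M A = (\<integral>\<^sup>+sA. \<integral>\<^sup>+sB. ?fiber A sA sB \<partial>lborel \<partial>lborel)"
    if [measurable]: "A \<in> sets (H \<Otimes>\<^sub>M (lborel \<Otimes>\<^sub>M lborel \<Otimes>\<^sub>M lborel \<Otimes>\<^sub>M lborel))" for A
    using nn_integral_bf_model[of "indicator A" \<mu> \<mu>] that by (simp add: sets_bf_model)
  have fiber_le: "?fiber ({\<omega>. pvalue \<omega> \<le> \<alpha>} \<inter> sighat -` B) sA sB = \<alpha> * (indicator B (sA, sB) * ?Z sA sB)"
    for sA sB
    by (cases "(sA, sB) \<in> B")
       (simp_all add: indicator_inter_arith indicator_vimage_sighat nn_integral_pvalue_le_fiber assms)
  have "emeasure ?M ({\<omega>. pvalue \<omega> \<le> \<alpha>} \<inter> sighat -` B)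
      = (\<integral>\<^sup>+sA. \<integral>\<^sup>+sB. \<alpha> * (indicator B (sA, sB) * ?Z sA sB) \<partial>lborel \<partial>lborel)"
    by (simp add: emeasure_eq[OF sets.Int[OF sets_pvalue_le sets_sighat]] fiber_le)
  also have "\<dots> = \<alpha> * (\<integral>\<^sup>+sA. \<integral>\<^sup>+sB. indicator B (sA, sB) * ?Z sA sB \<partial>lborel \<partial>lborel)"
    using B by (simp add: nn_integral_cmult)
  also have "\<dots> = \<alpha> * emeasure ?M (sighat -` B)"
    by (simp add: emeasure_eq[OF sets_sighat] nn_integral_sighat_fiber)
  finally show ?thesis
    using assms by (simp add: M.emeasure_eq_measure ennreal_mult[symmetric])
qed
end

theorem proposition3:
  fixes H :: "(real \<times> real) measure" and KA KB :: nat and \<mu>A \<mu>B :: real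
  assumes "2 \<le> KA" and "2 \<le> KB"
    and "prob_space H" and "sets H = sets (borel :: (real \<times> real) measure)"
    and "AE \<sigma> in H. 0 < fst \<sigma> \<and> 0 < snd \<sigma>"
    and "\<mu>A = \<mu>B"
  defines "M \<equiv> bf_model H KA KB \<mu>A \<mu>B"
  defines "E \<equiv> (\<lambda>\<alpha>. {\<omega> \<in> space M.
              PDV_H KA KB H (T_BF KA KB \<omega>) (sighatA \<omega>) (sighatB \<omega>) \<le> \<alpha>})"
  shows "(\<forall>\<alpha>\<in>{0<..<1}. AE \<omega> in M.
            real_cond_exp M (vimage_algebra (space M) (\<lambda>\<omega>. (sighatA \<omega>, sighatB \<omega>)) borel)
              (indicator (E \<alpha>)) \<omega> = \<alpha>)
       \<and> (\<forall>\<alpha>\<in>{0<..<1}. measure M (E \<alpha>) = \<alpha>)"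
proof -
  interpret bf_prior H KA KB
    using assms(1-5) by (rule bf_prior.intro)
  have sighat_eq: "(\<lambda>\<omega>. (sighatA \<omega>, sighatB \<omega>)) = sighat"
    by (simp add: sighat_def fun_eq_iff)
  have M: "M = bf_model H KA KB \<mu>B \<mu>B"
    unfolding M_def assms(6) ..
  interpret M: prob_space M
    unfolding M by (rule prob_space_bf_model)
  have E: "E \<alpha> = {\<omega>. pvalue \<omega> \<le> \<alpha>}" for \<alpha>
    by (simp add: E_def M space_bf_model pvalue_def)
  have sets_E: "E \<alpha> \<in> sets M" for \<alpha>
    unfolding E M sets_bf_model by (rule sets_pvalue_le)
  have sighat_measurable: "sighat \<in> M \<rightarrow>\<^sub>M borel"
    using measurable_sighat by (simp add: M measurable_cong_sets[OF sets_bf_model refl])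
  have level_sets: "measure M (E \<alpha> \<inter> (sighat -` B \<inter> space M)) = \<alpha> * measure M (sighat -` B \<inter> space M)"
    if "\<alpha> \<in> {0<..<1}" "B \<in> sets borel" for \<alpha> B
    using measure_pvalue_le_sighat[of \<alpha> B \<mu>B] that by (simp add: E M space_bf_model)
  show ?thesis
    unfolding sighat_eq
  proof (intro conjI ballI)
    fix \<alpha> :: real
    assume \<alpha>: "\<alpha> \<in> {0<..<1}"
    show "AE \<omega> in M. real_cond_exp M (vimage_algebra (space M) sighat borel) (indicator (E \<alpha>)) \<omega> = \<alpha>"
      by (rule real_cond_exp_indicator_eq_const[OF M.prob_space_axioms sets_E sighat_measurable level_sets[OF \<alpha>]])
    show "measure M (E \<alpha>) = \<alpha>"
      using level_sets[OF \<alpha>, of UNIV] sets.sets_into_space[OF sets_E] by (simp add: M.prob_space Int_absorb2)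
  qed
qed

end
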